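(* Let $x$ be a random vector in $\mathbb{R}^n$ (the data), let $e: \mathbb{R}^n \to \mathbb{R}^m$ be a measurable map (encoder) and $g: \mathbb{R}^m \to \mathbb{R}^n$ a $K$-Lipschitz map with respect to the Euclidean norms (decoder). Let $z = e(x)$, assume $z$ has finite second moments and $\mathbb{E}\|x - g(z)\|_2 < \infty$, and let $\bar z_i = \mathbb{E}[z_i]$ and $\sigma_i$ be the standard deviation of $z_i$. Let $P \subseteq \{1,\dots,m\}$ and define the pruned code $\tilde z_P$ by $[\tilde z_P]_i = z_i$ for $i \notin P$ and $[\tilde z_P]_i = \bar z_i$ for $i \in P$. Let $\epsilon = \mathbb{E}\|x - g(z)\|_2$ and $\tilde\epsilon = \mathbb{E}\|x - g(\tilde z_P)\|_2$. Then $$\tilde\epsilon - \epsilon \le K\sqrt{\sum_{i\in P} \sigma_i^2}.$$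
   Context: $\epsilon$ is the $L_2$ reconstruction error of the autoencoder, and $\tilde\epsilon$ the $L_2$ reconstruction error after pruning (fixing at their means) the latent dimensions indexed by $P$. *)

theory Defs
  imports "HOL-Probability.Probability"
begin

definition std_dev :: "'a measure \<Rightarrow> ('a \<Rightarrow> real) \<Rightarrow> real" where
  "std_dev M X = sqrt (integral\<^sup>L M (\<lambda>w. (X w - integral\<^sup>L M X)\<^sup>2))"

definition pruned_code :: "'a measure \<Rightarrow> ('a \<Rightarrow> real ^ 'm) \<Rightarrow> 'm set \<Rightarrow> 'a \<Rightarrow> real ^ 'm" where
  "pruned_code M z P w = (\<chi> i. if i \<in> P then integral\<^sup>L M (\<lambda>v. z v $ i) else z w $ i)"

end

theory Submission
  imports Defs
begin

text \<open>
  Replacing the code \<open>z\<close> by the pruned code \<open>z\<^sub>P\<close> moves the decoder output by at most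
  \<open>K \<parallel>z - z\<^sub>P\<parallel>\<close>, so by the triangle inequality the pointwise reconstruction error grows by at
  most that much. Taking expectations and applying Jensen's inequality \<open>E D \<le> sqrt (E D\<^sup>2)\<close>
  to \<open>D = \<parallel>z - z\<^sub>P\<parallel>\<close> leaves \<open>E \<parallel>z - z\<^sub>P\<parallel>\<^sup>2\<close>, which is exactly the sum of the variances of the
  pruned coordinates.
\<close>

lemma lipschitz_on_norm_diff_le:
  fixes g :: "'b::real_normed_vector \<Rightarrow> 'c::real_normed_vector"
  assumes "K-lipschitz_on UNIV g"
  shows "norm (x - g b) \<le> norm (x - g a) + K * norm (a - b)"
proof -
  have "norm (g a - g b) \<le> K * norm (a - b)"
    using lipschitz_onD[OF assms] by (simp add: dist_norm)
  moreover have "norm (x - g b) \<le> norm (x - g a) + norm (g a - g b)"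
    using norm_triangle_ineq[of "x - g a" "g a - g b"] by simp
  ultimately show ?thesis by linarith
qed

lemma (in prob_space) integral_le_sqrt_integral_square:
  fixes f :: "'a \<Rightarrow> real"
  assumes "integrable M f" and "integrable M (\<lambda>w. (f w)\<^sup>2)"
  shows "expectation f \<le> sqrt (expectation (\<lambda>w. (f w)\<^sup>2))"
proof -
  have "(expectation f)\<^sup>2 \<le> expectation (\<lambda>w. (f w)\<^sup>2)"
    using variance_eq[OF assms] variance_positive[of f] by simp
  then have "sqrt ((expectation f)\<^sup>2) \<le> sqrt (expectation (\<lambda>w. (f w)\<^sup>2))"
    by (rule real_sqrt_le_mono)
  then show ?thesis
    by simp
qed

lemma (in prob_space) integral_lipschitz_perturbation_le:
  fixes x :: "'a \<Rightarrow> 'c::{real_normed_vector, second_countable_topology}"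
    and z z' :: "'a \<Rightarrow> 'b::{real_normed_vector, second_countable_topology}"
  assumes lip: "K-lipschitz_on UNIV g"
    and [measurable]: "x \<in> borel_measurable M" "z \<in> borel_measurable M" "z' \<in> borel_measurable M"
    and err: "integrable M (\<lambda>w. norm (x w - g (z w)))"
    and dist_sq: "integrable M (\<lambda>w. (norm (z w - z' w))\<^sup>2)"
  shows "expectation (\<lambda>w. norm (x w - g (z' w))) - expectation (\<lambda>w. norm (x w - g (z w)))
           \<le> K * sqrt (expectation (\<lambda>w. (norm (z w - z' w))\<^sup>2))"
proof -
  have K: "0 \<le> K"
    using lip by (simp add: lipschitz_on_def)
  have [measurable]: "g \<in> borel_measurable borel"
    using lipschitz_on_continuous_on[OF lip] by (rule borel_measurable_continuous_onI)
  have dist: "integrable M (\<lambda>w. norm (z w - z' w))"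
    by (rule square_integrable_imp_integrable[OF _ dist_sq]) measurable
  have pointwise: "norm (x w - g (z' w)) \<le> norm (x w - g (z w)) + K * norm (z w - z' w)" for w
    using lip by (rule lipschitz_on_norm_diff_le)
  have err': "integrable M (\<lambda>w. norm (x w - g (z' w)))"
  proof (rule Bochner_Integration.integrable_bound)
    show "integrable M (\<lambda>w. norm (x w - g (z w)) + K * norm (z w - z' w))"
      using err dist by simp
    show "AE w in M. norm (norm (x w - g (z' w))) \<le> norm (norm (x w - g (z w)) + K * norm (z w - z' w))"
      using pointwise by (intro AE_I2) (auto intro: order_trans[OF _ abs_ge_self])
  qed measurable
  have "expectation (\<lambda>w. norm (x w - g (z' w)))
          \<le> expectation (\<lambda>w. norm (x w - g (z w))) + K * expectation (\<lambda>w. norm (z w - z' w))"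
    using integral_mono[OF err' _ pointwise] err dist by simp
  also have "\<dots> \<le> expectation (\<lambda>w. norm (x w - g (z w))) + K * sqrt (expectation (\<lambda>w. (norm (z w - z' w))\<^sup>2))"
    using mult_left_mono[OF integral_le_sqrt_integral_square[OF dist dist_sq] K] by simp
  finally show ?thesis by simp
qed

lemma norm_minus_pruned_code_square:
  "(norm (z w - pruned_code M z P w))\<^sup>2 = (\<Sum>i\<in>P. (z w $ i - integral\<^sup>L M (\<lambda>v. z v $ i))\<^sup>2)"
proof -
  have "(norm (z w - pruned_code M z P w))\<^sup>2
          = (\<Sum>i\<in>UNIV. if i \<in> P then (z w $ i - integral\<^sup>L M (\<lambda>v. z v $ i))\<^sup>2 else 0)"
    unfolding norm_vec_def L2_set_def pruned_code_def
    by (simp add: sum_nonneg, intro sum.cong) auto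
  also have "\<dots> = (\<Sum>i\<in>P. (z w $ i - integral\<^sup>L M (\<lambda>v. z v $ i))\<^sup>2)"
    by (simp add: sum.If_cases)
  finally show ?thesis .
qed

lemma borel_measurable_vec_nth [measurable (raw)]:
  fixes f :: "'a \<Rightarrow> 'b::topological_space ^ 'n"
  assumes "f \<in> borel_measurable M"
  shows "(\<lambda>w. f w $ i) \<in> borel_measurable M"
proof -
  have "(\<lambda>v::'b ^ 'n. v $ i) \<in> borel_measurable borel"
    by (rule borel_measurable_continuous_onI[OF continuous_on_component[OF continuous_on_id]])
  from measurable_compose[OF assms this] show ?thesis .
qed

lemma pruned_code_borel_measurable [measurable]:
  fixes z :: "'a \<Rightarrow> real ^ 'm"
  assumes "z \<in> borel_measurable N"
  shows "pruned_code M z P \<in> borel_measurable N"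
proof -
  have "continuous_on UNIV (\<lambda>v::real^'m. \<chi> i. if i \<in> P then integral\<^sup>L M (\<lambda>v. z v $ i) else v $ i)"
  proof (intro continuous_on_vec_lambda)
    show "continuous_on UNIV (\<lambda>v::real^'m. if i \<in> P then integral\<^sup>L M (\<lambda>v. z v $ i) else v $ i)" for i
      by (cases "i \<in> P") (simp_all add: continuous_on_component)
  qed
  then have "(\<lambda>v::real^'m. \<chi> i. if i \<in> P then integral\<^sup>L M (\<lambda>v. z v $ i) else v $ i) \<in> borel_measurable borel"
    by (rule borel_measurable_continuous_onI)
  from measurable_compose[OF assms this] show ?thesis
    by (simp add: pruned_code_def[abs_def] o_def)
qed

lemma (in prob_space) integral_norm_minus_pruned_code_square:
  fixes z :: "'a \<Rightarrow> real ^ 'm"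
  assumes [measurable]: "z \<in> borel_measurable M"
    and square_int: "\<And>i. integrable M (\<lambda>w. (z w $ i)\<^sup>2)"
  shows "integrable M (\<lambda>w. (norm (z w - pruned_code M z P w))\<^sup>2)"
    and "expectation (\<lambda>w. (norm (z w - pruned_code M z P w))\<^sup>2) = (\<Sum>i\<in>P. (std_dev M (\<lambda>w. z w $ i))\<^sup>2)"
proof -
  have centered: "integrable M (\<lambda>w. (z w $ i - expectation (\<lambda>v. z v $ i))\<^sup>2)" for i
  proof -
    have "integrable M (\<lambda>w. z w $ i)"
      by (rule square_integrable_imp_integrable[OF _ square_int]) measurable
    then have "integrable M (\<lambda>w. (z w $ i)\<^sup>2 - 2 * expectation (\<lambda>v. z v $ i) * z w $ i
                                + (expectation (\<lambda>v. z v $ i))\<^sup>2)"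
      using square_int by auto
    then show ?thesis
      by (simp add: power2_diff algebra_simps)
  qed
  then show "integrable M (\<lambda>w. (norm (z w - pruned_code M z P w))\<^sup>2)"
    unfolding norm_minus_pruned_code_square by auto
  have "(std_dev M X)\<^sup>2 = expectation (\<lambda>w. (X w - expectation X)\<^sup>2)" for X
    unfolding std_dev_def by (simp add: integral_nonneg_AE)
  then show "expectation (\<lambda>w. (norm (z w - pruned_code M z P w))\<^sup>2) = (\<Sum>i\<in>P. (std_dev M (\<lambda>w. z w $ i))\<^sup>2)"
    unfolding norm_minus_pruned_code_square using centered by (simp add: Bochner_Integration.integral_sum)
qed

theorem theorem3:
  fixes M :: "'a measure"
    and x :: "'a \<Rightarrow> real ^ 'n"
    and e :: "real ^ 'n \<Rightarrow> real ^ 'm"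
    and g :: "real ^ 'm \<Rightarrow> real ^ 'n"
    and K :: real
    and P :: "'m set"
  assumes "prob_space M"
    and "x \<in> borel_measurable M"
    and "e \<in> borel_measurable borel"
    and "K-lipschitz_on UNIV g"
    and "\<And>i. integrable M (\<lambda>w. ((e (x w)) $ i)\<^sup>2)"
    and "integrable M (\<lambda>w. norm (x w - g (e (x w))))"
  shows "integral\<^sup>L M (\<lambda>w. norm (x w - g (pruned_code M (\<lambda>v. e (x v)) P w)))
           - integral\<^sup>L M (\<lambda>w. norm (x w - g (e (x w))))
         \<le> K * sqrt (\<Sum>i\<in>P. (std_dev M (\<lambda>w. e (x w) $ i))\<^sup>2)"
proof -
  interpret prob_space M by fact
  have [measurable]: "x \<in> borel_measurable M" "e \<in> borel_measurable borel"
    using assms(2,3) .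
  have code [measurable]: "(\<lambda>w. e (x w)) \<in> borel_measurable M"
    by measurable
  note pruned = integral_norm_minus_pruned_code_square[OF code assms(5), of P]
  have "expectation (\<lambda>w. norm (x w - g (pruned_code M (\<lambda>v. e (x v)) P w)))
          - expectation (\<lambda>w. norm (x w - g (e (x w))))
        \<le> K * sqrt (expectation (\<lambda>w. (norm (e (x w) - pruned_code M (\<lambda>v. e (x v)) P w))\<^sup>2))"
    by (rule integral_lipschitz_perturbation_le[OF assms(4) _ _ _ assms(6) pruned(1)]) measurable
  then show ?thesis
    unfolding pruned(2) .
qed

end
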